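(* Let $n\ge0$ and $\mathbf{x}\in\mathbb{R}^{n+1}$ with $0\le\mathbf{x}_0<\dots<\mathbf{x}_n\le1$. Then $$\kappa_{M^n\to2}\big(V^n(\mathbf{x})\big)\le(n+1)^{3/2}\,\|\mathbf{w}^n\|_2.$$
   Context: $B^n_j(x)=\binom{n}{j}x^j(1-x)^{n-j}$; $V^n(\mathbf{x})$ is the Bernstein–Vandermonde matrix $V^n_{ij}(\mathbf{x})=B^n_j(\mathbf{x}_i)$. $M^n_{ij}=\int_0^1B^n_i(x)B^n_j(x)\,dx$ is the Bernstein mass matrix, $\|\mathbf{y}\|_{M^n}=\sqrt{\mathbf{y}^TM^n\mathbf{y}}$, $\|A\|_{M^n\to2}=\max_{\mathbf{y}\ne0}\|A\mathbf{y}\|_2/\|\mathbf{y}\|_{M^n}$, $\|A\|_{2\to M^n}=\max_{\mathbf{y}\ne0}\|A\mathbf{y}\|_{M^n}/\|\mathbf{y}\|_2$, and $\kappa_{M^n\to2}(A)=\|A\|_{M^n\to2}\|A^{-1}\|_{2\to M^n}$. For $0\le j\le n$, $\ell^{j,n}(x)=\prod_{i\ne j}\frac{x-\mathbf{x}_i}{\mathbf{x}_j-\mathbf{x}_i}$ is the $j$-th Lagrange polynomial for the nodes $\mathbf{x}$, and $\mathbf{w}^n\in\mathbb{R}^{n+1}$ has entries $\mathbf{w}^n_j=\|\ell^{j,n}\|_{L^2(0,1)}$. *)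

theory Defs
  imports "HOL-Analysis.Analysis" "Jordan_Normal_Form.Gauss_Jordan_Elimination"
begin

definition bernstein :: "nat \<Rightarrow> nat \<Rightarrow> real \<Rightarrow> real" where
  "bernstein n j x = real (n choose j) * x ^ j * (1 - x) ^ (n - j)"

definition bern_vandermonde :: "nat \<Rightarrow> real vec \<Rightarrow> real mat" where
  "bern_vandermonde n x = mat (n+1) (n+1) (\<lambda>(i,j). bernstein n j (x $ i))"

definition bern_mass :: "nat \<Rightarrow> real mat" where
  "bern_mass n = mat (n+1) (n+1) (\<lambda>(i,j). integral {0..1} (\<lambda>t. bernstein n i t * bernstein n j t))"

definition norm2_vec :: "real vec \<Rightarrow> real" where
  "norm2_vec y = sqrt (y \<bullet> y)"

definition normM_vec :: "nat \<Rightarrow> real vec \<Rightarrow> real" where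
  "normM_vec n y = sqrt (y \<bullet> (bern_mass n *\<^sub>v y))"

definition opnorm_M2 :: "nat \<Rightarrow> real mat \<Rightarrow> real" where
  "opnorm_M2 n A = Sup {norm2_vec (A *\<^sub>v y) / normM_vec n y | y. y \<in> carrier_vec (n+1) \<and> y \<noteq> 0\<^sub>v (n+1)}"

definition opnorm_2M :: "nat \<Rightarrow> real mat \<Rightarrow> real" where
  "opnorm_2M n A = Sup {normM_vec n (A *\<^sub>v y) / norm2_vec y | y. y \<in> carrier_vec (n+1) \<and> y \<noteq> 0\<^sub>v (n+1)}"

definition mat_inv :: "real mat \<Rightarrow> real mat" where
  "mat_inv A = the (mat_inverse A)"

definition kappa_M2 :: "nat \<Rightarrow> real mat \<Rightarrow> real" where
  "kappa_M2 n A = opnorm_M2 n A * opnorm_2M n (mat_inv A)"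

definition lagrange :: "nat \<Rightarrow> real vec \<Rightarrow> nat \<Rightarrow> real \<Rightarrow> real" where
  "lagrange n x j t = (\<Prod>i\<in>{0..n} - {j}. (t - x $ i) / (x $ j - x $ i))"

definition lagrange_weights :: "nat \<Rightarrow> real vec \<Rightarrow> real vec" where
  "lagrange_weights n x = vec (n+1) (\<lambda>j. sqrt (integral {0..1} (\<lambda>t. (lagrange n x j t)\<^sup>2)))"

end

theory Submission
  imports Defs "Jordan_Normal_Form.Determinant"
begin

text \<open>For \<open>y\<close> put \<open>p = \<Sum>\<^sub>j y\<^sub>j B\<^sup>n\<^sub>j\<close>; then \<open>V y = (p(x\<^sub>i))\<^sub>i\<close> and \<open>\<parallel>y\<parallel>\<^sub>M = \<parallel>p\<parallel>\<^sub>L\<^sub>2\<close>.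
  The Nikolskii-type inequality \<open>p(x)\<^sup>2 \<le> (n+1)\<^sup>2 \<parallel>p\<parallel>\<^sup>2\<^sub>L\<^sub>2\<close> on \<open>[0,1]\<close>, summed over the
  \<open>n+1\<close> nodes, bounds \<open>\<parallel>V\<parallel>\<^sub>M\<^sub>\<rightarrow>\<^sub>2\<close> by \<open>(n+1)\<^sup>3\<^sup>/\<^sup>2\<close>. At the endpoint \<open>x = 0\<close> it holds because
  the representer of \<open>q \<mapsto> q(0)\<close> on polynomials of degree \<open>\<le> n\<close> has squared norm \<open>(n+1)\<^sup>2\<close>;
  affine changes of variables carry it to any point of \<open>[0,1]\<close>. Conversely \<open>V\<^sup>-\<^sup>1 z\<close> is the
  Bernstein coefficient vector of the interpolant \<open>\<Sum>\<^sub>j z\<^sub>j \<ell>\<^sup>j\<^sup>,\<^sup>n\<close>, whose \<open>L\<^sup>2\<close> norm is at most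
  \<open>\<parallel>z\<parallel>\<^sub>2 \<parallel>w\<^sup>n\<parallel>\<^sub>2\<close> by Cauchy--Schwarz.\<close>

lemma alternating_binomial_sum_Suc:
  fixes f :: "nat \<Rightarrow> 'a::comm_ring_1"
  shows "(\<Sum>k\<le>Suc N. (-1)^k * of_nat (Suc N choose k) * f k)
       = (\<Sum>k\<le>N. (-1)^k * of_nat (N choose k) * (f k - f (Suc k)))"
proof -
  let ?h = "\<lambda>k. (-1)^k * of_nat (N choose k) * f k"
  have "(\<Sum>k\<le>N. (-1)^(Suc k) * of_nat (Suc N choose Suc k) * f (Suc k))
      = - (\<Sum>k\<le>N. (-1)^k * of_nat (N choose k) * f (Suc k))
        - (\<Sum>k\<le>N. (-1)^k * of_nat (N choose Suc k) * f (Suc k))"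
    by (simp add: sum_negf[symmetric] sum_subtractf[symmetric] algebra_simps)
  then have expand: "(\<Sum>k\<le>Suc N. (-1)^k * of_nat (Suc N choose k) * f k)
      = f 0 - (\<Sum>k\<le>N. (-1)^k * of_nat (N choose k) * f (Suc k))
            - (\<Sum>k\<le>N. (-1)^k * of_nat (N choose Suc k) * f (Suc k))"
    by (subst sum.atMost_Suc_shift) simp
  have shifted: "(\<Sum>k\<le>N. (-1)^k * of_nat (N choose Suc k) * f (Suc k)) = f 0 - (\<Sum>k\<le>N. ?h k)"
  proof -
    have "(\<Sum>k\<le>N. ?h k) = (\<Sum>k\<le>Suc N. ?h k)" by (simp add: binomial_eq_0)
    also have "\<dots> = ?h 0 + (\<Sum>k\<le>N. ?h (Suc k))" by (rule sum.atMost_Suc_shift)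
    finally show ?thesis by (simp add: sum_negf[symmetric])
  qed
  show ?thesis
    unfolding expand shifted by (simp add: sum_subtractf algebra_simps)
qed

definition shift_diff :: "'a::comm_ring_1 poly \<Rightarrow> 'a poly" where
  "shift_diff p = p - pcompose p [:1, 1:]"

lemma poly_shift_diff: "poly (shift_diff p) x = poly p x - poly p (x + 1)"
  by (simp add: shift_diff_def poly_pcompose algebra_simps)

lemma degree_shift_diff:
  fixes p :: "'a::idom poly"
  assumes "degree p \<le> Suc d"
  shows "degree (shift_diff p) \<le> d"
proof (rule degree_le, intro allI impI)
  fix i assume "d < i"
  have "degree (pcompose p [:1, 1:]) = degree p" by (simp add: degree_pcompose)
  moreover have "lead_coeff (pcompose p [:1, 1:]) = lead_coeff p"
    by (subst lead_coeff_comp) auto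
  ultimately show "coeff (shift_diff p) i = 0"
    using \<open>d < i\<close> assms
    by (cases "i = degree p") (auto simp: shift_diff_def coeff_eq_0)
qed

lemma alternating_binomial_sum_poly_eq_0:
  fixes p :: "'a::idom poly"
  assumes "degree p < N"
  shows "(\<Sum>k\<le>N. (-1)^k * of_nat (N choose k) * poly p (of_nat k)) = 0"
  using assms
proof (induction N arbitrary: p)
  case 0 then show ?case by simp
next
  case (Suc N)
  have "(\<Sum>k\<le>Suc N. (-1)^k * of_nat (Suc N choose k) * poly p (of_nat k))
      = (\<Sum>k\<le>N. (-1)^k * of_nat (N choose k) * poly (shift_diff p) (of_nat k))"
    unfolding alternating_binomial_sum_Suc by (simp add: poly_shift_diff add.commute)
  also have "\<dots> = 0"
  proof (cases N)
    case 0
    then obtain c where "p = [:c:]"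
      using Suc.prems by (auto elim: degree_eq_zeroE)
    then show ?thesis using 0 by (simp add: poly_shift_diff)
  next
    case (Suc M)
    then show ?thesis
      using Suc.IH degree_shift_diff[of p M] \<open>degree p < Suc N\<close> by simp
  qed
  finally show ?case .
qed

section \<open>The endpoint kernel\<close>

lemma binomial_mult_fact_eq_prod:
  "real (n + k choose n) * fact n = (\<Prod>i\<in>{1..n}. real k + real i)"
proof (induction n)
  case 0 then show ?case by simp
next
  case (Suc n)
  have "(Suc n + k choose Suc n) * Suc n = (n + k choose n) * Suc (n + k)"
    using Suc_times_binomial_eq[of "n + k" n] by (simp add: mult.commute)
  then have step: "real (Suc n + k choose Suc n) * real (Suc n)
      = real (n + k choose n) * (real n + real k + 1)"
    by (metis add.commute of_nat_Suc of_nat_add of_nat_mult)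
  have "real (Suc n + k choose Suc n) * fact (Suc n)
      = (real (Suc n + k choose Suc n) * real (Suc n)) * fact n"
    by (simp add: algebra_simps)
  also have "\<dots> = (real (n + k choose n) * fact n) * (real n + real k + 1)"
    unfolding step by (simp add: algebra_simps)
  also have "\<dots> = (\<Prod>i\<in>{1..Suc n}. real k + real i)"
    using Suc.IH by (simp add: prod.nat_ivl_Suc' algebra_simps)
  finally show ?case .
qed

text \<open>At positive integers \<open>k\<close> this polynomial of degree \<open>n\<close> takes the values
  \<open>k * (n + k choose n) / (m + k)\<close>; its vanishing \<open>(n + 1)\<close>-st finite difference is the
  moment identity of the endpoint kernel.\<close>
definition moment_poly :: "nat \<Rightarrow> nat \<Rightarrow> real poly" where
  "moment_poly n m = Polynomial.smult (1 / fact n)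
     (if m = 0 then (\<Prod>i\<in>{1..n}. [:real i, 1:]) else [:0, 1:] * (\<Prod>i\<in>{1..n} - {m}. [:real i, 1:]))"

lemma degree_moment_poly:
  assumes "m \<le> n"
  shows "degree (moment_poly n m) \<le> n"
proof -
  have linear_prod: "degree (\<Prod>i\<in>A. [:real i, 1:]) \<le> card A" if "finite A" for A :: "nat set"
    using degree_prod_sum_le[OF that, of "\<lambda>i. [:real i, 1:]"] by (simp add: o_def)
  show ?thesis
  proof (cases "m = 0")
    case True
    then show ?thesis using linear_prod[of "{1..n}"] by (simp add: moment_poly_def)
  next
    case False
    then have "card ({1..n} - {m}) + 1 \<le> n" using assms by (simp add: card_Diff_singleton)
    then show ?thesis
      using False linear_prod[of "{1..n} - {m}"]
        degree_mult_le[of "[:0, 1::real:]" "\<Prod>i\<in>{1..n} - {m}. [:real i, 1:]"]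
      by (simp add: moment_poly_def)
  qed
qed

lemma poly_moment_poly:
  "poly (moment_poly n m) t = (1 / fact n) *
     (if m = 0 then (\<Prod>i\<in>{1..n}. t + real i) else t * (\<Prod>i\<in>{1..n} - {m}. t + real i))"
  by (simp add: moment_poly_def poly_prod add.commute)

lemma poly_moment_poly_0: "poly (moment_poly n m) 0 = (if m = 0 then 1 else 0)"
  using binomial_mult_fact_eq_prod[of n 0] by (simp add: poly_moment_poly)

lemma poly_moment_poly_of_nat:
  assumes "m \<le> n" "k > 0"
  shows "poly (moment_poly n m) (real k) = real k * real (n + k choose n) / (real m + real k)"
proof (cases "m = 0")
  case True
  then show ?thesis using binomial_mult_fact_eq_prod[of n k] assms
    by (simp add: poly_moment_poly field_simps)
next
  case False
  then have "m \<in> {1..n}" using assms by auto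
  then have "real (n + k choose n) * fact n
      = (real k + real m) * (\<Prod>i\<in>{1..n} - {m}. real k + real i)"
    using binomial_mult_fact_eq_prod[of n k] prod.remove[of "{1..n}" m "\<lambda>i. real k + real i"]
    by simp
  then have "(\<Prod>i\<in>{1..n} - {m}. real k + real i) = real (n + k choose n) * fact n / (real k + real m)"
    using assms by (simp add: field_simps)
  then show ?thesis using False assms by (simp add: poly_moment_poly add.commute)
qed

definition endpoint_kernel_coeff :: "nat \<Rightarrow> nat \<Rightarrow> real" where
  "endpoint_kernel_coeff n i =
     (-1)^i * real (i + 1) * real (n + i + 1 choose n) * real (n + 1 choose (i + 1))"

lemma endpoint_kernel_coeff_moments:
  assumes "m \<le> n"
  shows "(\<Sum>i\<le>n. endpoint_kernel_coeff n i / (real m + real i + 1)) = (if m = 0 then 1 else 0)"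
proof -
  let ?P = "moment_poly n m"
  have "(\<Sum>i\<le>n. endpoint_kernel_coeff n i / (real m + real i + 1))
      = (\<Sum>i\<le>n. (-1)^i * real (Suc n choose Suc i) * poly ?P (real (Suc i)))"
  proof (rule sum.cong[OF refl])
    fix i
    show "endpoint_kernel_coeff n i / (real m + real i + 1)
        = (-1)^i * real (Suc n choose Suc i) * poly ?P (real (Suc i))"
      using poly_moment_poly_of_nat[OF assms, of "Suc i"]
      by (simp add: endpoint_kernel_coeff_def field_simps)
  qed
  also have "\<dots> = poly ?P 0 - (\<Sum>k\<le>Suc n. (-1)^k * real (Suc n choose k) * poly ?P (real k))"
    by (subst sum.atMost_Suc_shift) (simp add: sum_negf[symmetric])
  also have "(\<Sum>k\<le>Suc n. (-1)^k * real (Suc n choose k) * poly ?P (real k)) = 0"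
    using alternating_binomial_sum_poly_eq_0[of ?P "Suc n"] degree_moment_poly[OF assms] by simp
  finally show ?thesis by (simp add: poly_moment_poly_0)
qed

text \<open>The representer \<open>r\<close> of the point evaluation \<open>q \<mapsto> q 0\<close> in \<open>L\<^sup>2(0,1)\<close>, on polynomials of
  degree at most \<open>n\<close>: its coefficients are fixed by the moment conditions
  \<open>\<integral>\<^sub>0\<^sup>1 t\<^sup>m r(t) dt = (if m = 0 then 1 else 0)\<close> for \<open>m \<le> n\<close>.\<close>
definition endpoint_kernel :: "nat \<Rightarrow> real poly" where
  "endpoint_kernel n = (\<Sum>i\<le>n. monom (endpoint_kernel_coeff n i) i)"

lemma coeff_endpoint_kernel:
  "coeff (endpoint_kernel n) i = (if i \<le> n then endpoint_kernel_coeff n i else 0)"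
  by (simp add: endpoint_kernel_def coeff_sum coeff_monom)

lemma degree_endpoint_kernel: "degree (endpoint_kernel n) \<le> n"
  by (rule degree_le) (simp add: coeff_endpoint_kernel)

lemma poly_endpoint_kernel_0: "poly (endpoint_kernel n) 0 = (real n + 1)^2"
  by (simp add: poly_0_coeff_0 coeff_endpoint_kernel endpoint_kernel_coeff_def power2_eq_square
      add.commute)

lemma has_integral_power_01: "((\<lambda>t::real. t^k) has_integral 1 / (real k + 1)) {0..1}"
proof -
  have "((\<lambda>t. t^Suc k / real (Suc k)) has_real_derivative x^k) (at x)" for x :: real
    using DERIV_cdivide[OF DERIV_pow[of "Suc k" x], of "real (Suc k)"] by simp
  then have "((\<lambda>t::real. t^k) has_integral (1^Suc k / real (Suc k) - 0^Suc k / real (Suc k))) {0..1}"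
    by (intro fundamental_theorem_of_calculus)
       (auto simp: has_real_derivative_iff_has_vector_derivative[symmetric]
             intro: has_field_derivative_at_within)
  then show ?thesis by (simp add: add.commute)
qed

lemma has_integral_mult_endpoint_kernel:
  fixes q :: "real poly"
  assumes "degree q \<le> n"
  shows "((\<lambda>t. poly q t * poly (endpoint_kernel n) t) has_integral poly q 0) {0..1}"
proof -
  let ?c = "endpoint_kernel_coeff n"
  have expand: "poly q t * poly (endpoint_kernel n) t
      = (\<Sum>j\<le>n. coeff q j * (\<Sum>i\<le>n. ?c i * t^(j + i)))" for t
  proof -
    have "poly q t = (\<Sum>j\<le>n. coeff q j * t^j)"
      using arg_cong[OF poly_as_sum_of_monoms'[OF assms], of "\<lambda>p. poly p t"]
      by (simp add: poly_sum poly_monom)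
    moreover have "poly (endpoint_kernel n) t = (\<Sum>i\<le>n. ?c i * t^i)"
      by (simp add: endpoint_kernel_def poly_sum poly_monom)
    ultimately have "poly q t * poly (endpoint_kernel n) t
        = (\<Sum>j\<le>n. \<Sum>i\<le>n. (coeff q j * t^j) * (?c i * t^i))"
      by (simp only: sum_product)
    then show ?thesis by (simp add: sum_distrib_left power_add algebra_simps)
  qed
  have "((\<lambda>t. \<Sum>j\<le>n. coeff q j * (\<Sum>i\<le>n. ?c i * t^(j + i))) has_integral
        (\<Sum>j\<le>n. coeff q j * (\<Sum>i\<le>n. ?c i * (1 / (real (j + i) + 1))))) {0..1}"
    by (intro has_integral_sum has_integral_mult_right has_integral_power_01) auto
  also have "(\<Sum>j\<le>n. coeff q j * (\<Sum>i\<le>n. ?c i * (1 / (real (j + i) + 1))))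
      = (\<Sum>j\<le>n. coeff q j * (if j = 0 then 1 else 0))"
    using endpoint_kernel_coeff_moments by (intro sum.cong refl) (simp add: add.assoc)
  also have "\<dots> = poly q 0" by (simp add: poly_0_coeff_0 if_distrib cong: if_cong)
  finally show ?thesis unfolding expand .
qed

lemma poly_0_sq_le_integral:
  fixes q :: "real poly"
  assumes "degree q \<le> n"
  shows "(poly q 0)^2 \<le> (real n + 1)^2 * integral {0..1} (\<lambda>t. (poly q t)^2)"
proof -
  let ?r = "poly (endpoint_kernel n)"
  define I where "I = integral {0..1} (\<lambda>t. (poly q t)^2)"
  define l where "l = poly q 0 / (real n + 1)^2"
  have qq: "((\<lambda>t. (poly q t)^2) has_integral I) {0..1}"
    unfolding I_def by (intro integrable_integral integrable_continuous_interval continuous_intros)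
  have qr: "((\<lambda>t. poly q t * ?r t) has_integral poly q 0) {0..1}"
    by (rule has_integral_mult_endpoint_kernel[OF assms])
  have rr: "((\<lambda>t. ?r t * ?r t) has_integral (real n + 1)^2) {0..1}"
    using has_integral_mult_endpoint_kernel[OF degree_endpoint_kernel]
    by (simp add: poly_endpoint_kernel_0)
  have "((\<lambda>t. (poly q t)^2 - 2 * l * (poly q t * ?r t) + l^2 * (?r t * ?r t)) has_integral
      (I - 2 * l * poly q 0 + l^2 * (real n + 1)^2)) {0..1}"
    by (intro has_integral_add has_integral_diff has_integral_mult_right qq qr rr)
  moreover have "(poly q t)^2 - 2 * l * (poly q t * ?r t) + l^2 * (?r t * ?r t)
      = (poly q t - l * ?r t)^2" for t
    by (simp add: power2_eq_square algebra_simps)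
  ultimately have "((\<lambda>t. (poly q t - l * ?r t)^2) has_integral
      (I - 2 * l * poly q 0 + l^2 * (real n + 1)^2)) {0..1}"
    by simp
  then have "0 \<le> I - 2 * l * poly q 0 + l^2 * (real n + 1)^2"
    by (rule has_integral_nonneg) simp
  also have "I - 2 * l * poly q 0 + l^2 * (real n + 1)^2 = I - (poly q 0)^2 / (real n + 1)^2"
    unfolding l_def by (simp add: power2_eq_square)
  finally show ?thesis unfolding I_def by (simp add: field_simps)
qed


section \<open>A Nikolskii-type inequality\<close>

lemma integral_poly_sq_nonneg: "0 \<le> integral {a..b} (\<lambda>t. (poly q t)^2)"
  for q :: "real poly"
  by (intro integral_nonneg integrable_continuous_interval continuous_intros) auto

lemma poly_sq_at_left_le_integral:
  fixes q :: "real poly"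
  assumes "degree q \<le> n" "a \<le> b"
  shows "(poly q a)^2 * (b - a) \<le> (real n + 1)^2 * integral {a..b} (\<lambda>t. (poly q t)^2)"
proof (cases "a = b")
  case True
  then show ?thesis using integral_poly_sq_nonneg[of a b q] by simp
next
  case False
  define L where "L = b - a"
  have L: "L > 0" using False assms unfolding L_def by simp
  define Q where "Q = pcompose q [:a, L:]"
  have deg_Q: "degree Q \<le> n"
    unfolding Q_def using degree_pcompose_le[of q "[:a, L:]"] assms(1) L by simp
  have poly_Q: "poly Q s = poly q (L * s + a)" for s
    unfolding Q_def by (simp add: poly_pcompose algebra_simps)
  define I where "I = integral {a..b} (\<lambda>t. (poly q t)^2)"
  have "((\<lambda>t. (poly q t)^2) has_integral I) (cbox a b)"
    unfolding I_def box_real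
    by (intro integrable_integral integrable_continuous_interval continuous_intros)
  from has_integral_affinity'[OF this L, of a]
  have "((\<lambda>s. (poly Q s)^2) has_integral I / L) {0..1}"
    using L by (simp add: poly_Q L_def box_real divide_inverse mult.commute)
  then have "integral {0..1} (\<lambda>s. (poly Q s)^2) = I / L" by (rule integral_unique)
  with poly_0_sq_le_integral[OF deg_Q] have "(poly q a)^2 \<le> (real n + 1)^2 * (I / L)"
    by (simp add: poly_Q)
  then show ?thesis using L unfolding L_def I_def by (simp add: field_simps)
qed

lemma poly_sq_at_right_le_integral:
  fixes q :: "real poly"
  assumes "degree q \<le> n" "a \<le> b"
  shows "(poly q b)^2 * (b - a) \<le> (real n + 1)^2 * integral {a..b} (\<lambda>t. (poly q t)^2)"
proof -
  define Q where "Q = pcompose q [:0, -1:]"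
  have deg_Q: "degree Q \<le> n"
    unfolding Q_def using degree_pcompose_le[of q "[:0, -1:]"] assms(1) by simp
  have poly_Q: "poly Q s = poly q (- s)" for s
    unfolding Q_def by (simp add: poly_pcompose)
  have "(poly Q (-b))^2 * (-a - -b) \<le> (real n + 1)^2 * integral {-b..-a} (\<lambda>t. (poly Q t)^2)"
    using assms by (intro poly_sq_at_left_le_integral[OF deg_Q]) simp
  also have "integral {-b..-a} (\<lambda>t. (poly Q t)^2) = integral {a..b} (\<lambda>t. (poly q t)^2)"
    unfolding poly_Q using Henstock_Kurzweil_Integration.integral_reflect_real[of b a "\<lambda>t. (poly q t)^2"] by simp
  finally show ?thesis by (simp add: poly_Q)
qed

text \<open>Split \<open>[0,1]\<close> at \<open>x\<close> and apply the endpoint estimates on both pieces, whose lengths add up to \<open>1\<close>.\<close>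
lemma nikolskii_inequality:
  fixes q :: "real poly"
  assumes "degree q \<le> n" "0 \<le> x" "x \<le> 1"
  shows "(poly q x)^2 \<le> (real n + 1)^2 * integral {0..1} (\<lambda>t. (poly q t)^2)"
proof -
  have "(poly q x)^2 = (poly q x)^2 * (x - 0) + (poly q x)^2 * (1 - x)"
    by (simp add: algebra_simps)
  also have "\<dots> \<le> (real n + 1)^2 * integral {0..x} (\<lambda>t. (poly q t)^2)
      + (real n + 1)^2 * integral {x..1} (\<lambda>t. (poly q t)^2)"
    using assms
    by (intro add_mono poly_sq_at_right_le_integral poly_sq_at_left_le_integral) auto
  also have "\<dots> = (real n + 1)^2 * integral {0..1} (\<lambda>t. (poly q t)^2)"
    unfolding distrib_left[symmetric] using assms
    by (subst Henstock_Kurzweil_Integration.integral_combine)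
      (auto intro!: integrable_continuous_interval continuous_intros)
  finally show ?thesis .
qed

lemma integral_sum_square:
  fixes f :: "'i \<Rightarrow> real \<Rightarrow> real"
  assumes "finite I" "\<And>i. i \<in> I \<Longrightarrow> continuous_on {a..b} (f i)"
  shows "integral {a..b} (\<lambda>t. (\<Sum>i\<in>I. c i * f i t)^2)
       = (\<Sum>i\<in>I. \<Sum>j\<in>I. c i * c j * integral {a..b} (\<lambda>t. f i t * f j t))"
proof (rule integral_unique)
  have "(\<Sum>i\<in>I. c i * f i t)^2 = (\<Sum>i\<in>I. \<Sum>j\<in>I. c i * c j * (f i t * f j t))" for t
    unfolding power2_eq_square sum_product by (simp add: algebra_simps)
  moreover have "((\<lambda>t. \<Sum>i\<in>I. \<Sum>j\<in>I. c i * c j * (f i t * f j t)) has_integral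
      (\<Sum>i\<in>I. \<Sum>j\<in>I. c i * c j * integral {a..b} (\<lambda>t. f i t * f j t))) {a..b}"
    using assms
    by (intro has_integral_sum has_integral_mult_right integrable_integral
        integrable_continuous_interval continuous_intros) auto
  ultimately show "((\<lambda>t. (\<Sum>i\<in>I. c i * f i t)^2) has_integral
      (\<Sum>i\<in>I. \<Sum>j\<in>I. c i * c j * integral {a..b} (\<lambda>t. f i t * f j t))) {a..b}"
    by simp
qed

definition bernstein_poly :: "nat \<Rightarrow> nat \<Rightarrow> real poly" where
  "bernstein_poly n j = Polynomial.smult (real (n choose j)) ([:0, 1:]^j * [:1, -1:]^(n - j))"

lemma poly_bernstein_poly: "poly (bernstein_poly n j) t = bernstein n j t"
  by (simp add: bernstein_poly_def bernstein_def)

lemma degree_bernstein_poly: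
  assumes "j \<le> n"
  shows "degree (bernstein_poly n j) \<le> n"
proof -
  have "degree ([:0, 1::real:]^j * [:1, -1:]^(n - j))
      \<le> degree ([:0, 1::real:]^j) + degree ([:1, -1::real:]^(n - j))"
    by (rule degree_mult_le)
  also have "\<dots> \<le> n"
    using assms degree_power_le[of "[:0, 1::real:]" j] degree_power_le[of "[:1, -1::real:]" "n - j"]
    by simp
  finally show ?thesis
    unfolding bernstein_poly_def using degree_smult_le order_trans by blast
qed

definition bernstein_sum :: "nat \<Rightarrow> real vec \<Rightarrow> real poly" where
  "bernstein_sum n y = (\<Sum>j\<in>{0..<n+1}. Polynomial.smult (y $ j) (bernstein_poly n j))"

lemma poly_bernstein_sum: "poly (bernstein_sum n y) t = (\<Sum>j\<in>{0..<n+1}. y $ j * bernstein n j t)"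
  by (simp add: bernstein_sum_def poly_sum poly_bernstein_poly)

lemma degree_bernstein_sum: "degree (bernstein_sum n y) \<le> n"
  unfolding bernstein_sum_def
proof (rule degree_sum_le)
  fix j assume "j \<in> {0..<n+1}"
  then show "degree (Polynomial.smult (y $ j) (bernstein_poly n j)) \<le> n"
    using degree_bernstein_poly[of j n] degree_smult_le[of "y $ j" "bernstein_poly n j"] by simp
qed simp

lemma normM_vec_eq:
  assumes "y \<in> carrier_vec (n+1)"
  shows "normM_vec n y = sqrt (integral {0..1} (\<lambda>t. (poly (bernstein_sum n y) t)^2))"
proof -
  have "y \<bullet> (bern_mass n *\<^sub>v y) = (\<Sum>i\<in>{0..<n+1}. \<Sum>j\<in>{0..<n+1}.
      y $ i * y $ j * integral {0..1} (\<lambda>t. bernstein n i t * bernstein n j t))"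
    using assms
    by (simp add: bern_mass_def scalar_prod_def sum_distrib_left algebra_simps)
  also have "\<dots> = integral {0..1} (\<lambda>t. (poly (bernstein_sum n y) t)^2)"
    unfolding poly_bernstein_sum
    by (rule integral_sum_square[symmetric]) (auto simp: bernstein_def intro!: continuous_intros)
  finally show ?thesis by (simp add: normM_vec_def)
qed

lemma normM_vec_nonneg: "y \<in> carrier_vec (n+1) \<Longrightarrow> 0 \<le> normM_vec n y"
  by (simp add: normM_vec_eq integral_poly_sq_nonneg)

lemma norm2_vec_nonneg: "0 \<le> norm2_vec y"
  by (simp add: norm2_vec_def scalar_prod_def sum_nonneg)

lemma bern_vandermonde_carrier: "bern_vandermonde n x \<in> carrier_mat (n+1) (n+1)"
  by (simp add: bern_vandermonde_def)

lemma bern_vandermonde_mult_vec: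
  assumes "y \<in> carrier_vec (n+1)" "i < n+1"
  shows "(bern_vandermonde n x *\<^sub>v y) $ i = poly (bernstein_sum n y) (x $ i)"
  using assms
  by (simp add: bern_vandermonde_def scalar_prod_def poly_bernstein_sum mult.commute)

lemma nodes_in_unit_interval:
  fixes x :: "real vec"
  assumes "0 \<le> x $ 0" "x $ n \<le> 1"
    and increasing: "\<And>i j. i < j \<Longrightarrow> j \<le> n \<Longrightarrow> x $ i < x $ j"
    and "i \<le> n"
  shows "0 \<le> x $ i" "x $ i \<le> 1"
proof -
  have "x $ 0 \<le> x $ i" using increasing[of 0 i] \<open>i \<le> n\<close> by (cases "i = 0") auto
  moreover have "x $ i \<le> x $ n" using increasing[of i n] \<open>i \<le> n\<close> by (cases "i = n") auto
  ultimately show "0 \<le> x $ i" "x $ i \<le> 1" using assms(1,2) by auto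
qed

lemma card_nodes:
  fixes x :: "real vec"
  assumes increasing: "\<And>i j. i < j \<Longrightarrow> j \<le> n \<Longrightarrow> x $ i < x $ j"
  shows "card ((\<lambda>i. x $ i) ` {0..n}) = n + 1"
proof -
  have "inj_on (\<lambda>i. x $ i) {0..n}"
  proof (rule inj_onI)
    fix i j assume "i \<in> {0..n}" "j \<in> {0..n}" "x $ i = x $ j"
    then show "i = j"
      using increasing[of i j] increasing[of j i] by (cases i j rule: linorder_cases) auto
  qed
  then show ?thesis by (simp add: card_image)
qed

lemma norm2_bern_vandermonde_le:
  fixes x :: "real vec"
  assumes "0 \<le> x $ 0" "x $ n \<le> 1"
    and increasing: "\<And>i j. i < j \<Longrightarrow> j \<le> n \<Longrightarrow> x $ i < x $ j"
    and y: "y \<in> carrier_vec (n+1)"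
  shows "norm2_vec (bern_vandermonde n x *\<^sub>v y) \<le> (real n + 1) powr (3/2) * normM_vec n y"
proof -
  let ?p = "bernstein_sum n y"
  define I where "I = integral {0..1} (\<lambda>t. (poly ?p t)^2)"
  have "dim_vec (bern_vandermonde n x *\<^sub>v y) = n + 1" by (simp add: bern_vandermonde_def)
  then have "(bern_vandermonde n x *\<^sub>v y) \<bullet> (bern_vandermonde n x *\<^sub>v y)
      = (\<Sum>i\<in>{0..<n+1}. (poly ?p (x $ i))^2)"
    unfolding scalar_prod_def using y
    by (intro sum.cong refl)
      (simp_all add: bern_vandermonde_mult_vec power2_eq_square del: index_mult_mat_vec)
  also have "\<dots> \<le> (\<Sum>i\<in>{0..<n+1}. (real n + 1)^2 * I)"
    unfolding I_def
    using nodes_in_unit_interval[OF assms(1,2) increasing]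
    by (intro sum_mono nikolskii_inequality[OF degree_bernstein_sum]) auto
  also have "\<dots> = (real n + 1)^3 * I" by (simp add: power3_eq_cube power2_eq_square)
  finally have "norm2_vec (bern_vandermonde n x *\<^sub>v y) \<le> sqrt ((real n + 1)^3 * I)"
    unfolding norm2_vec_def by simp
  also have "\<dots> = (real n + 1) powr (3/2) * normM_vec n y"
    using y by (simp add: normM_vec_eq I_def real_sqrt_mult powr_half_sqrt_powr)
  finally show ?thesis .
qed


section \<open>Invertibility of the Bernstein--Vandermonde matrix\<close>

lemma bernstein_at_ratio:
  fixes s :: real
  assumes "s \<ge> 0" "j \<le> n"
  shows "bernstein n j (s / (1 + s)) * (1 + s)^n = real (n choose j) * s^j"
proof -
  have pos: "1 + s > 0" using assms by simp
  then have "1 - s / (1 + s) = 1 / (1 + s)" by (simp add: field_simps)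
  then have "bernstein n j (s / (1 + s)) = real (n choose j) * (s^j / (1 + s)^j) * (1 / (1 + s)^(n - j))"
    by (simp add: bernstein_def power_divide)
  moreover have "(1 + s)^n = (1 + s)^j * (1 + s)^(n - j)"
    using assms by (simp flip: power_add)
  ultimately show ?thesis using pos by (simp add: field_simps)
qed

lemma bernstein_sum_eq_0_imp:
  assumes "c \<in> carrier_vec (n+1)" "bernstein_sum n c = 0"
  shows "c = 0\<^sub>v (n+1)"
proof -
  define Q where "Q = (\<Sum>j\<in>{0..<n+1}. monom (c $ j * real (n choose j)) j)"
  have coeff_Q: "coeff Q k = (if k < n+1 then c $ k * real (n choose k) else 0)" for k
    unfolding Q_def by (simp add: coeff_sum coeff_monom)
  have "poly Q s = 0" if "s \<ge> 0" for s
  proof -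
    have "poly Q s = (\<Sum>j\<in>{0..<n+1}. c $ j * bernstein n j (s / (1 + s))) * (1 + s)^n"
      unfolding Q_def sum_distrib_right poly_sum poly_monom
      by (intro sum.cong refl) (auto simp: bernstein_at_ratio[OF that] mult.assoc)
    then show ?thesis using assms(2) poly_bernstein_sum[of n c "s / (1 + s)"] by simp
  qed
  moreover have "degree Q \<le> n" by (rule degree_le) (simp add: coeff_Q)
  moreover have "card (real ` {0..n}) = n + 1" by (simp add: card_image)
  ultimately have "Q = 0"
    by (intro poly_eqI_degree[of "real ` {0..n}"]) auto
  show ?thesis
  proof (rule eq_vecI)
    fix j assume "j < dim_vec (0\<^sub>v (n+1) :: real vec)"
    then show "c $ j = 0\<^sub>v (n+1) $ j"
      using arg_cong[OF \<open>Q = 0\<close>, of "\<lambda>p. coeff p j"] by (simp add: coeff_Q)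
  qed (use assms(1) in simp)
qed

lemma det_bern_vandermonde_nonzero:
  fixes x :: "real vec"
  assumes increasing: "\<And>i j. i < j \<Longrightarrow> j \<le> n \<Longrightarrow> x $ i < x $ j"
  shows "det (bern_vandermonde n x) \<noteq> 0"
proof
  assume "det (bern_vandermonde n x) = 0"
  then obtain c where c: "c \<in> carrier_vec (n+1)" "c \<noteq> 0\<^sub>v (n+1)"
      and kernel: "bern_vandermonde n x *\<^sub>v c = 0\<^sub>v (n+1)"
    using det_0_iff_vec_prod_zero[OF bern_vandermonde_carrier] by blast
  have "poly (bernstein_sum n c) (x $ i) = 0" if "i \<le> n" for i
    using that bern_vandermonde_mult_vec[OF c(1), of i x] arg_cong[OF kernel, of "\<lambda>v. v $ i"]
    by simp
  then have "bernstein_sum n c = 0"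
    using card_nodes[OF increasing] degree_bernstein_sum[of n c]
    by (intro poly_eqI_degree[of "(\<lambda>i. x $ i) ` {0..n}"]) auto
  then show False using bernstein_sum_eq_0_imp[OF c(1)] c(2) by simp
qed

lemma mat_inv_right:
  fixes A :: "real mat"
  assumes A: "A \<in> carrier_mat n n" and "det A \<noteq> 0"
  shows "A * mat_inv A = 1\<^sub>m n" "mat_inv A \<in> carrier_mat n n"
proof -
  have "A \<in> Units (ring_mat TYPE(real) n ())"
    by (rule det_non_zero_imp_unit[OF A \<open>det A \<noteq> 0\<close>])
  then obtain B where B: "mat_inverse A = Some B"
    using mat_inverse(1)[OF A] by fastforce
  then show "A * mat_inv A = 1\<^sub>m n" "mat_inv A \<in> carrier_mat n n"
    using mat_inverse(2)[OF A B] by (auto simp: mat_inv_def)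
qed

section \<open>Lagrange interpolation\<close>

definition lagrange_poly :: "nat \<Rightarrow> real vec \<Rightarrow> nat \<Rightarrow> real poly" where
  "lagrange_poly n x j = (\<Prod>i\<in>{0..n} - {j}. [:- (x $ i) / (x $ j - x $ i), 1 / (x $ j - x $ i):])"

lemma poly_lagrange_poly: "poly (lagrange_poly n x j) t = lagrange n x j t"
  unfolding lagrange_poly_def lagrange_def poly_prod
  by (intro prod.cong refl) (simp add: diff_divide_distrib)

lemma degree_lagrange_poly:
  assumes "j \<le> n"
  shows "degree (lagrange_poly n x j) \<le> n"
proof -
  have "degree (lagrange_poly n x j) \<le> (\<Sum>i\<in>{0..n} - {j}. degree [:- (x $ i) / (x $ j - x $ i), 1 / (x $ j - x $ i):])"
    unfolding lagrange_poly_def by (rule order_trans[OF degree_prod_sum_le]) (simp_all add: o_def)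
  also have "\<dots> \<le> (\<Sum>i\<in>{0..n} - {j}. 1)" by (intro sum_mono) simp
  also have "\<dots> = n" using assms by (simp add: card_Diff_singleton)
  finally show ?thesis .
qed

lemma lagrange_at_node:
  fixes x :: "real vec"
  assumes increasing: "\<And>i j. i < j \<Longrightarrow> j \<le> n \<Longrightarrow> x $ i < x $ j"
    and "i \<le> n" "j \<le> n"
  shows "lagrange n x j (x $ i) = (if i = j then 1 else 0)"
proof (cases "i = j")
  case True
  have "x $ j \<noteq> x $ k" if "k \<in> {0..n} - {j}" for k
    using increasing[of j k] increasing[of k j] that \<open>j \<le> n\<close>
    by (cases j k rule: linorder_cases) auto
  then have "lagrange n x j (x $ j) = 1" unfolding lagrange_def by (intro prod.neutral) auto
  then show ?thesis using True by simp
next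
  case False
  then have "i \<in> {0..n} - {j}" using \<open>i \<le> n\<close> by auto
  then have "lagrange n x j (x $ i) = 0"
    unfolding lagrange_def by (intro prod_zero) (auto intro!: bexI[of _ i])
  then show ?thesis using False by simp
qed

definition lagrange_interp :: "nat \<Rightarrow> real vec \<Rightarrow> real vec \<Rightarrow> real poly" where
  "lagrange_interp n x z = (\<Sum>j\<in>{0..<n+1}. Polynomial.smult (z $ j) (lagrange_poly n x j))"

lemma poly_lagrange_interp: "poly (lagrange_interp n x z) t = (\<Sum>j\<in>{0..<n+1}. z $ j * lagrange n x j t)"
  by (simp add: lagrange_interp_def poly_sum poly_lagrange_poly)

lemma degree_lagrange_interp: "degree (lagrange_interp n x z) \<le> n"
  unfolding lagrange_interp_def
proof (rule degree_sum_le)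
  fix j assume "j \<in> {0..<n+1}"
  then show "degree (Polynomial.smult (z $ j) (lagrange_poly n x j)) \<le> n"
    using degree_lagrange_poly[of j n x] degree_smult_le[of "z $ j" "lagrange_poly n x j"] by simp
qed simp

lemma lagrange_interp_at_node:
  fixes x :: "real vec"
  assumes increasing: "\<And>i j. i < j \<Longrightarrow> j \<le> n \<Longrightarrow> x $ i < x $ j" and "i \<le> n"
  shows "poly (lagrange_interp n x z) (x $ i) = z $ i"
proof -
  have "poly (lagrange_interp n x z) (x $ i) = (\<Sum>j\<in>{0..<n+1}. z $ j * (if i = j then 1 else 0))"
    unfolding poly_lagrange_interp
    using lagrange_at_node[OF increasing \<open>i \<le> n\<close>] by (intro sum.cong refl) auto
  also have "\<dots> = z $ i" using \<open>i \<le> n\<close> by (simp add: if_distrib cong: if_cong)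
  finally show ?thesis .
qed

text \<open>Pointwise Cauchy--Schwarz \<open>(\<Sum>j. z\<^sub>j \<ell>\<^sub>j(t))\<^sup>2 \<le> |z|\<^sup>2 \<Sum>j. \<ell>\<^sub>j(t)\<^sup>2\<close>, integrated over \<open>[0,1]\<close>.\<close>
lemma integral_lagrange_interp_sq_le:
  assumes z: "z \<in> carrier_vec (n+1)"
  shows "integral {0..1} (\<lambda>t. (poly (lagrange_interp n x z) t)^2)
       \<le> (z \<bullet> z) * (lagrange_weights n x \<bullet> lagrange_weights n x)"
proof -
  let ?J = "{0..<n+1}"
  have cont: "continuous_on {0..1} (lagrange n x j)" for j
  proof -
    have "lagrange n x j = (\<lambda>t. poly (lagrange_poly n x j) t)"
      by (simp add: fun_eq_iff poly_lagrange_poly)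
    then show ?thesis by (simp add: continuous_intros)
  qed
  have "integral {0..1} (\<lambda>t. (poly (lagrange_interp n x z) t)^2)
      \<le> integral {0..1} (\<lambda>t. (\<Sum>j\<in>?J. (z $ j)^2) * (\<Sum>j\<in>?J. (lagrange n x j t)^2))"
    unfolding poly_lagrange_interp using cont
    by (intro integral_le Cauchy_Schwarz_ineq_sum integrable_continuous_interval continuous_intros)
  also have "\<dots> = (\<Sum>j\<in>?J. (z $ j)^2) * integral {0..1} (\<lambda>t. \<Sum>j\<in>?J. (lagrange n x j t)^2)"
    by (rule integral_mult_right)
  also have "integral {0..1} (\<lambda>t. \<Sum>j\<in>?J. (lagrange n x j t)^2)
      = (\<Sum>j\<in>?J. integral {0..1} (\<lambda>t. (lagrange n x j t)^2))"
    using cont by (intro integral_sum integrable_continuous_interval continuous_intros) auto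
  also have "(\<Sum>j\<in>?J. (z $ j)^2) = z \<bullet> z"
    using z by (simp add: scalar_prod_def power2_eq_square)
  also have "(\<Sum>j\<in>?J. integral {0..1} (\<lambda>t. (lagrange n x j t)^2))
      = lagrange_weights n x \<bullet> lagrange_weights n x"
    unfolding scalar_prod_def
    by (intro sum.cong) (simp_all add: lagrange_weights_def integral_nonneg cont
        integrable_continuous_interval continuous_intros)
  finally show ?thesis .
qed

lemma normM_mat_inv_bern_vandermonde_le:
  fixes x :: "real vec"
  assumes increasing: "\<And>i j. i < j \<Longrightarrow> j \<le> n \<Longrightarrow> x $ i < x $ j"
    and z: "z \<in> carrier_vec (n+1)"
  shows "normM_vec n (mat_inv (bern_vandermonde n x) *\<^sub>v z) \<le> norm2_vec (lagrange_weights n x) * norm2_vec z"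
proof -
  let ?V = "bern_vandermonde n x"
  note inv = mat_inv_right[OF bern_vandermonde_carrier[of n x] det_bern_vandermonde_nonzero[of n x, OF increasing]]
  define c where "c = mat_inv ?V *\<^sub>v z"
  have c: "c \<in> carrier_vec (n+1)" unfolding c_def using inv(2) z by simp
  have "?V *\<^sub>v c = z"
    unfolding c_def using assoc_mult_mat_vec[OF bern_vandermonde_carrier[of n x] inv(2) z] inv(1) z by simp
  then have "poly (bernstein_sum n c) s = poly (lagrange_interp n x z) s"
    if "s \<in> (\<lambda>i. x $ i) ` {0..n}" for s
    using that bern_vandermonde_mult_vec[OF c, of _ x] lagrange_interp_at_node[OF increasing]
    by auto
  then have "bernstein_sum n c = lagrange_interp n x z"
    using card_nodes[OF increasing] degree_bernstein_sum[of n c] degree_lagrange_interp[of n x z]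
    by (intro poly_eqI_degree[of "(\<lambda>i. x $ i) ` {0..n}"]) auto
  then have "normM_vec n c = sqrt (integral {0..1} (\<lambda>t. (poly (lagrange_interp n x z) t)^2))"
    using normM_vec_eq[OF c] by simp
  also have "\<dots> \<le> sqrt ((z \<bullet> z) * (lagrange_weights n x \<bullet> lagrange_weights n x))"
    by (rule real_sqrt_le_mono[OF integral_lagrange_interp_sq_le[OF z]])
  also have "\<dots> = norm2_vec (lagrange_weights n x) * norm2_vec z"
    by (simp add: norm2_vec_def real_sqrt_mult)
  finally show ?thesis unfolding c_def .
qed

lemma cSup_ratio_bounds:
  fixes f g :: "'a \<Rightarrow> real"
  assumes "P y\<^sub>0" "0 \<le> C"
    and nonneg: "\<And>y. P y \<Longrightarrow> 0 \<le> f y" "\<And>y. P y \<Longrightarrow> 0 \<le> g y"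
    and bound: "\<And>y. P y \<Longrightarrow> f y \<le> C * g y"
  shows "0 \<le> Sup {f y / g y | y. P y}" "Sup {f y / g y | y. P y} \<le> C"
proof -
  let ?S = "{f y / g y | y. P y}"
  have le_C: "r \<le> C" if r: "r \<in> ?S" for r
  proof -
    obtain y where "P y" "r = f y / g y" using r by blast
    then show ?thesis
      using \<open>0 \<le> C\<close> nonneg(2)[of y] bound[of y]
      by (cases "g y = 0") (auto simp: pos_divide_le_eq)
  qed
  have y\<^sub>0: "f y\<^sub>0 / g y\<^sub>0 \<in> ?S" using \<open>P y\<^sub>0\<close> by blast
  show "Sup ?S \<le> C" using y\<^sub>0 le_C by (intro cSup_least) auto
  have "bdd_above ?S" using le_C by (rule bdd_aboveI)
  then show "0 \<le> Sup ?S"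
    using nonneg[OF \<open>P y\<^sub>0\<close>] by (intro cSup_upper2[OF y\<^sub>0]) auto
qed

lemma opnorm_M2_bern_vandermonde_le:
  fixes x :: "real vec"
  assumes "0 \<le> x $ 0" "x $ n \<le> 1"
    and increasing: "\<And>i j. i < j \<Longrightarrow> j \<le> n \<Longrightarrow> x $ i < x $ j"
  shows "opnorm_M2 n (bern_vandermonde n x) \<le> (real n + 1) powr (3/2)"
  unfolding opnorm_M2_def
  using norm2_bern_vandermonde_le[OF assms] norm2_vec_nonneg normM_vec_nonneg
  by (intro cSup_ratio_bounds(2)[where y\<^sub>0 = "unit_vec (n+1) 0"]) auto

lemma opnorm_2M_mat_inv_bern_vandermonde:
  fixes x :: "real vec"
  assumes increasing: "\<And>i j. i < j \<Longrightarrow> j \<le> n \<Longrightarrow> x $ i < x $ j"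
  shows "0 \<le> opnorm_2M n (mat_inv (bern_vandermonde n x))"
    "opnorm_2M n (mat_inv (bern_vandermonde n x)) \<le> norm2_vec (lagrange_weights n x)"
proof -
  let ?B = "mat_inv (bern_vandermonde n x)"
  note inv = mat_inv_right[OF bern_vandermonde_carrier[of n x] det_bern_vandermonde_nonzero[of n x, OF increasing]]
  note bounds = cSup_ratio_bounds[where P = "\<lambda>y. y \<in> carrier_vec (n+1) \<and> y \<noteq> 0\<^sub>v (n+1)"
      and f = "\<lambda>y. normM_vec n (?B *\<^sub>v y)" and g = norm2_vec and y\<^sub>0 = "unit_vec (n+1) 0"
      and C = "norm2_vec (lagrange_weights n x)"]
  show "0 \<le> opnorm_2M n ?B" "opnorm_2M n ?B \<le> norm2_vec (lagrange_weights n x)"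
    unfolding opnorm_2M_def
    using inv(2) normM_mat_inv_bern_vandermonde_le[OF increasing]
    by (intro bounds; simp add: normM_vec_nonneg norm2_vec_nonneg)+
qed

theorem theorem4p3:
  fixes n :: nat and x :: "real vec"
  assumes "x \<in> carrier_vec (n+1)"
    and "0 \<le> x $ 0" and "x $ n \<le> 1"
    and "\<And>i j. i < j \<Longrightarrow> j \<le> n \<Longrightarrow> x $ i < x $ j"
  shows "kappa_M2 n (bern_vandermonde n x)
           \<le> (real n + 1) powr (3/2) * norm2_vec (lagrange_weights n x)"
  unfolding kappa_M2_def
  using opnorm_M2_bern_vandermonde_le[OF assms(2-4)]
    opnorm_2M_mat_inv_bern_vandermonde[OF assms(4)]
  by (intro mult_mono) auto

end
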